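(* Let $\beta$ be irrational with continued fraction denominators $(q'_n)_{n\ge1}$. Let $f:\mathbb{T}\to\mathbb{R}$ be real analytic and not a trigonometric polynomial, with Fourier coefficients $a_k$, and let $(l_k)_{k\ge1}$ be a strictly increasing sequence of positive integers with $a_{l_k}\neq0$ and $|a_{l_k}|/T_{l_k}\to\infty$, where $T_n=\sum_{j\ge2}|a_{jn}|\,|jn|$. For $k\ge1$ let $\eta(k)$ be the smallest integer with $q'_{\eta(k)}>2k^2/|a_{l_k}|^2$. For $n,m\ge1$ let $V_{n,m}=\{\alpha\in\mathbb{R}\setminus\mathbb{Q}: q_n(\alpha)=l_m \text{ and } q_{n+1}(\alpha)>2q'_{\eta(m)}n^2\}$, and $\mathcal{U}_j=\bigcup_{n\ge1}V_{n,j}$. Then for every $M\ge1$ the set $\bigcup_{j\ge M}\mathcal{U}_j$ is dense in $\mathbb{R}$.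
   Context: For an irrational $\gamma=[c_0;c_1,c_2,\dots]$, its continued fraction denominators are $q_0=1$, $q_1=c_1$, $q_n=c_nq_{n-1}+q_{n-2}$; $q_n(\gamma)$ denotes the $n$-th one. $\mathbb{T}=\mathbb{R}/\mathbb{Z}$. *)

theory Defs
  imports "HOL-Analysis.Analysis"
begin

fun cf_rem :: "real \<Rightarrow> nat \<Rightarrow> real" where
  "cf_rem x 0 = x"
| "cf_rem x (Suc n) = 1 / frac (cf_rem x n)"

definition cf_digit :: "real \<Rightarrow> nat \<Rightarrow> int" where
  "cf_digit x n = \<lfloor>cf_rem x n\<rfloor>"

fun cf_den :: "real \<Rightarrow> nat \<Rightarrow> int" where
  "cf_den x 0 = 1"
| "cf_den x (Suc 0) = cf_digit x 1"
| "cf_den x (Suc (Suc n)) = cf_digit x (Suc (Suc n)) * cf_den x (Suc n) + cf_den x n"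

definition real_analytic :: "(real \<Rightarrow> real) \<Rightarrow> bool" where
  "real_analytic f \<longleftrightarrow> (\<forall>x. \<exists>r>0. \<exists>c::nat \<Rightarrow> real.
      \<forall>y. \<bar>y - x\<bar> < r \<longrightarrow> (\<lambda>n. c n * (y - x) ^ n) sums f y)"

text \<open>Functions on T = R/Z are represented as 1-periodic functions on R.\<close>
definition periodic1 :: "(real \<Rightarrow> real) \<Rightarrow> bool" where
  "periodic1 f \<longleftrightarrow> (\<forall>x. f (x + 1) = f x)"

definition fourier_coeff :: "(real \<Rightarrow> real) \<Rightarrow> int \<Rightarrow> complex" where
  "fourier_coeff f k = integral {0..1} (\<lambda>x. complex_of_real (f x) * cis (- 2 * pi * of_int k * x))"

definition trig_poly :: "(real \<Rightarrow> real) \<Rightarrow> bool" where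
  "trig_poly f \<longleftrightarrow> (\<exists>N::nat. \<forall>k::int. \<bar>k\<bar> > int N \<longrightarrow> fourier_coeff f k = 0)"

definition T_sum :: "(real \<Rightarrow> real) \<Rightarrow> nat \<Rightarrow> real" where
  "T_sum f n = (\<Sum>i. norm (fourier_coeff f (int ((i + 2) * n))) * real ((i + 2) * n))"

definition eta :: "real \<Rightarrow> (real \<Rightarrow> real) \<Rightarrow> (nat \<Rightarrow> nat) \<Rightarrow> nat \<Rightarrow> nat" where
  "eta \<beta> f l k = (LEAST n. n \<ge> 1 \<and>
      real_of_int (cf_den \<beta> n) > 2 * (real k)^2 / (norm (fourier_coeff f (int (l k))))^2)"

definition V_set :: "real \<Rightarrow> (real \<Rightarrow> real) \<Rightarrow> (nat \<Rightarrow> nat) \<Rightarrow> nat \<Rightarrow> nat \<Rightarrow> real set" where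
  "V_set \<beta> f l n m = {\<alpha>. \<alpha> \<notin> \<rat> \<and> cf_den \<alpha> n = int (l m) \<and>
      real_of_int (cf_den \<alpha> (Suc n)) > 2 * real_of_int (cf_den \<beta> (eta \<beta> f l m)) * (real n)^2}"

definition U_set :: "real \<Rightarrow> (real \<Rightarrow> real) \<Rightarrow> (nat \<Rightarrow> nat) \<Rightarrow> nat \<Rightarrow> real set" where
  "U_set \<beta> f l j = (\<Union>n\<in>{1..}. V_set \<beta> f l n j)"

end

(*
  Given x, e and M, take j >= M with q = l_j large.
  Legendre's sieve over the prime factors of q counts about e * totient q integers coprime to q
  in an interval of length e q, with error at most 2^omega(q); since 4^omega(q) q <= 6561 totient(q)^2,
  this is positive, giving a reduced fraction p/q within e/2 of x. Running the Euclidean algorithm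
  on p/q and ending with a huge irrational complete quotient produces an irrational alpha within
  e/2 of p/q that has p/q as a convergent, with the next denominator as large as required.
*)

theory Submission
  imports Defs "HOL-Number_Theory.Totient"
begin

definition sifted :: "nat set \<Rightarrow> real \<Rightarrow> real \<Rightarrow> int set" where
  "sifted S a b = {n. a < of_int n \<and> of_int n \<le> b \<and> (\<forall>p\<in>S. \<not> int p dvd n)}"

lemma sifted_empty: "sifted {} a b = {\<lfloor>a\<rfloor> + 1..\<lfloor>b\<rfloor>}"
  by (auto simp: sifted_def le_floor_iff add1_zle_eq floor_less_iff)

lemma finite_sifted [simp]: "finite (sifted S a b)"
proof -
  have "sifted S a b \<subseteq> sifted {} a b"
    by (auto simp: sifted_def)
  then show ?thesis
    by (rule finite_subset) (simp add: sifted_empty)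
qed

lemma card_sifted_empty:
  assumes "a \<le> b"
  shows "\<bar>real (card (sifted {} a b)) - (b - a)\<bar> \<le> 1"
  using floor_mono[OF assms] by (simp add: sifted_empty) linarith

lemma sifted_multiples:
  assumes "prime p" "p \<notin> S" "\<forall>s\<in>S. prime s"
  shows "(\<lambda>m. int p * m) ` sifted S (a / p) (b / p) = {n \<in> sifted S a b. int p dvd n}"
proof -
  have "0 < real p"
    using assms(1) prime_gt_0_nat by simp
  have "int s dvd int p * m \<longleftrightarrow> int s dvd m" if "s \<in> S" for s m
  proof -
    have "coprime s p"
      using assms that primes_coprime by metis
    then show ?thesis
      by (simp add: coprime_dvd_mult_right_iff)
  qed
  with \<open>0 < real p\<close> show ?thesis
    by (force simp: sifted_def field_simps image_iff)
qed

lemma card_sifted_estimate: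
  assumes "finite S" "\<forall>p\<in>S. prime p" "a \<le> b"
  shows "\<bar>real (card (sifted S a b)) - (b - a) * (\<Prod>p\<in>S. 1 - 1 / real p)\<bar> \<le> 2 ^ card S"
  using assms
proof (induction S arbitrary: a b rule: finite_induct)
  case empty
  then show ?case
    using card_sifted_empty by simp
next
  case (insert p S)
  have "prime p" "\<forall>s\<in>S. prime s"
    using insert.prems by auto
  then have "0 < real p"
    using prime_gt_0_nat by simp
  let ?M = "sifted S (a / p) (b / p)"
  have M: "(\<lambda>m. int p * m) ` ?M = {n \<in> sifted S a b. int p dvd n}"
    using sifted_multiples[OF \<open>prime p\<close> insert.hyps(2) \<open>\<forall>s\<in>S. prime s\<close>] .
  have "sifted (insert p S) a b = sifted S a b - (\<lambda>m. int p * m) ` ?M"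
    unfolding M by (auto simp: sifted_def)
  moreover have "card ((\<lambda>m. int p * m) ` ?M) = card ?M"
    using \<open>0 < real p\<close> by (intro card_image) (auto simp: inj_on_def)
  moreover have "(\<lambda>m. int p * m) ` ?M \<subseteq> sifted S a b"
    unfolding M by auto
  ultimately have card_insert:
      "real (card (sifted (insert p S) a b)) = real (card (sifted S a b)) - real (card ?M)"
    by (metis card_Diff_subset card_mono finite_imageI finite_sifted of_nat_diff)
  have "\<bar>real (card ?M) - (b / p - a / p) * (\<Prod>p\<in>S. 1 - 1 / real p)\<bar> \<le> 2 ^ card S"
    using insert.IH \<open>\<forall>s\<in>S. prime s\<close> insert.prems(2) \<open>0 < real p\<close> by (simp add: divide_right_mono)
  moreover have "\<bar>real (card (sifted S a b)) - (b - a) * (\<Prod>p\<in>S. 1 - 1 / real p)\<bar> \<le> 2 ^ card S"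
    using insert by simp
  moreover have "(b - a) * (\<Prod>p\<in>insert p S. 1 - 1 / real p)
      = (b - a) * (\<Prod>p\<in>S. 1 - 1 / real p) - (b / p - a / p) * (\<Prod>p\<in>S. 1 - 1 / real p)"
    using insert.hyps \<open>0 < real p\<close> by (simp add: field_simps)
  ultimately show ?case
    unfolding card_insert using insert.hyps by simp
qed

lemma prod_square_pred_lower_bound:
  assumes "finite S" "\<forall>p\<in>S. 2 \<le> p"
  shows "4 ^ card S * (\<Prod>p\<in>S. real p) \<le> 6561 * (\<Prod>p\<in>S. (real p - 1) ^ 2)"
proof -
  \<comment> \<open>\<open>4 p \<le> (p - 1)\<^sup>2\<close> fails only for \<open>p \<le> 5\<close>, where a factor 9 repairs it.\<close>
  define c :: "nat \<Rightarrow> real" where "c p = (if p \<le> 5 then 9 else 1)" for p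
  have "4 * real p \<le> c p * (real p - 1) ^ 2" if "p \<in> S" for p
  proof (cases "p \<le> 5")
    case True
    then have "p \<in> {2, 3, 4, 5}"
      using assms(2) that by auto
    then show ?thesis
      by (auto simp: c_def power2_eq_square)
  next
    case False
    then have "(real p - 1) ^ 2 - 4 * real p = (real p - 6) * real p + 1"
      by (simp add: power2_eq_square algebra_simps)
    moreover have "0 \<le> (real p - 6) * real p"
      using False by simp
    ultimately have "4 * real p \<le> (real p - 1) ^ 2"
      by linarith
    then show ?thesis
      using False by (simp add: c_def)
  qed
  then have "(\<Prod>p\<in>S. 4 * real p) \<le> (\<Prod>p\<in>S. c p) * (\<Prod>p\<in>S. (real p - 1) ^ 2)"
    by (simp add: prod_mono flip: prod.distrib)
  moreover have "(\<Prod>p\<in>S. c p) \<le> 6561"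
  proof -
    have "(\<Prod>p\<in>S. c p) = 9 ^ card {p \<in> S. p \<le> 5}"
      using prod.inter_filter[OF assms(1), of "\<lambda>_. 9 :: real" "\<lambda>p. p \<le> 5"] by (simp add: c_def)
    moreover have "card {p \<in> S. p \<le> 5} \<le> card {2..5::nat}"
      using assms(2) by (intro card_mono) auto
    then have "(9::real) ^ card {p \<in> S. p \<le> 5} \<le> 9 ^ 4"
      by (intro power_increasing) simp_all
    ultimately show ?thesis
      by simp
  qed
  then have "(\<Prod>p\<in>S. c p) * (\<Prod>p\<in>S. (real p - 1) ^ 2) \<le> 6561 * (\<Prod>p\<in>S. (real p - 1) ^ 2)"
    by (rule mult_right_mono) (simp add: prod_nonneg)
  ultimately show ?thesis
    by (simp add: prod.distrib)
qed

lemma prod_prime_factors_le: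
  assumes "0 < n"
  shows "(\<Prod>p\<in>prime_factors n. real p) \<le> real n"
proof -
  have "(\<Prod>p\<in>prime_factors n. p) dvd (\<Prod>p\<in>prime_factors n. p ^ multiplicity p n)"
    by (intro prod_dvd_prod dvd_power) (auto simp: prime_factors_multiplicity)
  then have "(\<Prod>p\<in>prime_factors n. p) dvd n"
    by (simp only: prime_factorization_nat[OF assms, symmetric])
  then have "(\<Prod>p\<in>prime_factors n. p) \<le> n"
    using assms by (rule dvd_imp_le)
  then have "real (\<Prod>p\<in>prime_factors n. p) \<le> real n"
    by (rule of_nat_mono)
  then show ?thesis
    by simp
qed

lemma totient_square_lower_bound:
  assumes "0 < n"
  shows "4 ^ card (prime_factors n) * real n \<le> 6561 * real (totient n) ^ 2"
proof -
  let ?S = "prime_factors n"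
  define R where "R = (\<Prod>p\<in>?S. real p)"
  define P where "P = (\<Prod>p\<in>?S. real p - 1)"
  have p_ge_2: "\<forall>p\<in>?S. 2 \<le> p"
    using prime_ge_2_nat by auto
  then have "0 < R"
    unfolding R_def by (intro prod_pos) auto
  have "real (totient n) = n * (\<Prod>p\<in>?S. (real p - 1) / real p)"
    unfolding totient_formula2 using p_ge_2
    by (intro arg_cong2[of _ _ _ _ "(*)"] prod.cong) (auto simp: field_simps)
  then have totient_eq: "real (totient n) * R = n * P"
    using \<open>0 < R\<close> by (simp add: R_def P_def prod_dividef)
  have "4 ^ card ?S * real n * R ^ 2 \<le> 4 ^ card ?S * R * real n ^ 2"
    using prod_prime_factors_le[OF assms] \<open>0 < R\<close> by (simp add: R_def power2_eq_square mult_left_mono)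
  also have "\<dots> \<le> 6561 * P ^ 2 * real n ^ 2"
    using mult_right_mono[OF prod_square_pred_lower_bound[OF _ p_ge_2], of "real n ^ 2"]
    by (simp add: R_def P_def prod_power_distrib)
  also have "\<dots> = 6561 * (real n * P) ^ 2"
    by (simp add: power_mult_distrib)
  also have "\<dots> = 6561 * real (totient n) ^ 2 * R ^ 2"
    by (simp only: totient_eq[symmetric] power_mult_distrib mult.assoc)
  finally show ?thesis
    using \<open>0 < R\<close> by simp
qed

lemma coprime_if_no_prime_factor_dvd:
  assumes "0 < q" "\<forall>p\<in>prime_factors q. \<not> int p dvd n"
  shows "coprime n (int q)"
proof (rule ccontr)
  assume "\<not> coprime n (int q)"
  define g where "g = gcd n (int q)"
  have "0 \<le> g" "g \<noteq> 1"
    using \<open>\<not> coprime n (int q)\<close> by (simp_all add: g_def coprime_iff_gcd_eq_1)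
  then have "nat g \<noteq> 1"
    by (simp add: nat_eq_iff)
  then obtain p where p: "prime p" "p dvd nat g"
    using prime_factor_nat by blast
  then have "int p dvd g"
    using \<open>0 \<le> g\<close> by (metis int_dvd_int_iff int_nat_eq)
  then have "int p dvd n" "int p dvd int q"
    by (auto simp: g_def)
  then show False
    using assms p(1) by (auto simp: in_prime_factors_iff)
qed

lemma two_power_card_prime_factors_less:
  assumes "0 < e" "6561 / e ^ 2 < real q"
  shows "2 ^ card (prime_factors q) < e * totient q"
proof -
  let ?S = "prime_factors q"
  have "0 < 6561 / e ^ 2"
    using assms(1) by simp
  then have "0 < q"
    using assms(2) by (metis of_nat_0_less_iff order.strict_trans)
  have "(2 ^ card ?S) ^ 2 * 6561 = (4::real) ^ card ?S * 6561"
    by (simp add: power2_eq_square flip: power_mult_distrib)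
  also have "\<dots> < 4 ^ card ?S * (e ^ 2 * real q)"
    using assms by (simp add: field_simps)
  also have "\<dots> \<le> e ^ 2 * (6561 * real (totient q) ^ 2)"
    using totient_square_lower_bound[OF \<open>0 < q\<close>] assms by (simp add: algebra_simps)
  finally have "(2 ^ card ?S) ^ 2 < (e * totient q) ^ 2"
    by (simp add: power_mult_distrib)
  then show ?thesis
    by (rule power_less_imp_less_base) (use assms in simp)
qed

lemma eventually_coprime_fraction_near:
  assumes "0 < e"
  shows "\<forall>\<^sub>F q in sequentially. \<forall>y. \<exists>p::int. coprime p (int q) \<and> \<bar>p / q - y\<bar> < e"
proof -
  have "\<forall>\<^sub>F q in sequentially. 6561 / e ^ 2 < real q"
    using filterlim_real_sequentially by (simp add: filterlim_at_top_dense)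
  then show ?thesis
  proof (rule eventually_mono, intro allI)
    fix q :: nat and y :: real
    assume "6561 / e ^ 2 < real q"
    let ?S = "prime_factors q"
    have card_bound: "2 ^ card ?S < e * totient q"
      using two_power_card_prime_factors_less[OF assms] \<open>6561 / e ^ 2 < real q\<close> .
    then have "0 < q"
      by (cases "q = 0") auto
    define a b where "a = q * y - e * q / 2" and "b = q * y + e * q / 2"
    have "(b - a) * (\<Prod>p\<in>?S. 1 - 1 / real p) = e * totient q"
      by (simp add: a_def b_def totient_formula2)
    moreover have "a \<le> b"
      using assms by (simp add: a_def b_def)
    ultimately have "\<bar>real (card (sifted ?S a b)) - e * totient q\<bar> \<le> 2 ^ card ?S"
      using card_sifted_estimate[of ?S a b] by auto
    then have "sifted ?S a b \<noteq> {}"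
      using card_bound by auto
    then obtain n where n: "n \<in> sifted ?S a b"
      by blast
    then have "coprime n (int q)"
      using coprime_if_no_prime_factor_dvd[OF \<open>0 < q\<close>] by (auto simp: sifted_def)
    moreover have "\<bar>n / q - y\<bar> < e"
    proof -
      have "q * y - e * q / 2 < n" "n \<le> q * y + e * q / 2"
        using n by (auto simp: sifted_def a_def b_def)
      then have "y - e / 2 < n / q" "n / q \<le> y + e / 2"
        using \<open>0 < q\<close> by (simp_all add: field_simps)
      then show ?thesis
        using assms by linarith
    qed
    ultimately show "\<exists>p::int. coprime p (int q) \<and> \<bar>p / q - y\<bar> < e"
      by blast
  qed
qed

fun cf_num :: "real \<Rightarrow> nat \<Rightarrow> int" where
  "cf_num x 0 = cf_digit x 0"
| "cf_num x (Suc 0) = cf_digit x 1 * cf_digit x 0 + 1"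
| "cf_num x (Suc (Suc n)) = cf_digit x (Suc (Suc n)) * cf_num x (Suc n) + cf_num x n"

lemma cf_rem_add_inverse:
  assumes "1 < \<beta>"
  shows "cf_rem (of_int a + 1 / \<beta>) (Suc k) = cf_rem \<beta> k"
proof (induction k)
  case 0
  have "frac (of_int a + 1 / \<beta>) = 1 / \<beta>"
    using assms by (simp add: frac_eq)
  then show ?case by simp
qed simp

lemma cf_digit_add_inverse:
  assumes "1 < \<beta>"
  shows "cf_digit (of_int a + 1 / \<beta>) 0 = a"
    and "cf_digit (of_int a + 1 / \<beta>) (Suc k) = cf_digit \<beta> k"
  using assms cf_rem_add_inverse[OF assms]
  by (simp_all add: cf_digit_def floor_eq_iff)

lemma cf_den_num_add_inverse:
  assumes "1 < \<beta>"
  shows "cf_den (of_int a + 1 / \<beta>) (Suc n) = cf_num \<beta> n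
       \<and> cf_num (of_int a + 1 / \<beta>) (Suc n) = a * cf_num \<beta> n + cf_den \<beta> n"
proof (induction n rule: induct_nat_012)
  case (ge2 n)
  then show ?case
    using cf_digit_add_inverse(2)[OF assms, of a "Suc (Suc n)"] by (simp add: algebra_simps)
qed (simp_all add: cf_digit_add_inverse[OF assms] algebra_simps numeral_2_eq_2)

lemma cf_den_add_int: "cf_den (x + of_int k) n = cf_den x n"
proof -
  have "cf_rem (x + of_int k) (Suc m) = cf_rem x (Suc m)" for m
    by (induction m) auto
  then have "cf_digit (x + of_int k) (Suc m) = cf_digit x (Suc m)" for m
    by (simp add: cf_digit_def)
  then show ?thesis
    by (induction x n rule: cf_den.induct) simp_all
qed

lemma irrational_add_inverse: "\<beta> \<notin> \<rat> \<Longrightarrow> of_int a + 1 / \<beta> \<notin> \<rat>"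
  by (metis Rats_diff Rats_of_int Rats_inverse add_diff_cancel_left' inverse_eq_divide inverse_inverse_eq)

lemma exists_irrational_gt: "\<exists>t::real. t \<notin> \<rat> \<and> X < t"
proof -
  have "\<not> {X<..<X + 1} \<subseteq> \<rat>"
    using countable_rat uncountable_open_interval[of X "X + 1"] countable_subset by auto
  then show ?thesis by auto
qed

lemma exists_irrational_near_integer:
  fixes p :: int and B \<delta> :: real
  assumes "1 \<le> p" "0 < \<delta>"
  shows "\<exists>\<alpha>. \<alpha> \<notin> \<rat> \<and> cf_num \<alpha> 0 = p \<and> B < cf_den \<alpha> 1 \<and> B < cf_num \<alpha> 1 \<and> \<bar>\<alpha> - p\<bar> < \<delta>"
proof -
  obtain t where t: "t \<notin> \<rat>" "max (max B (1 / \<delta>)) 1 + 1 < t"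
    using exists_irrational_gt by blast
  have t_gt: "1 < t" "B < \<lfloor>t\<rfloor>" "1 \<le> \<lfloor>t\<rfloor>" "1 / \<delta> < t"
    using t(2) by linarith+
  have "1 / t < \<delta>"
    using t_gt(1,4) \<open>0 < \<delta>\<close> by (simp add: field_simps)
  have "\<lfloor>t\<rfloor> \<le> \<lfloor>t\<rfloor> * p"
    using t_gt(3) assms(1) by simp
  then have "B < of_int (\<lfloor>t\<rfloor> * p + 1)"
    using t_gt(2) by linarith
  moreover have "cf_num t 0 = \<lfloor>t\<rfloor>"
    by (simp add: cf_digit_def)
  ultimately show ?thesis
    using t_gt \<open>1 / t < \<delta>\<close> irrational_add_inverse[OF t(1)]
      cf_den_num_add_inverse[OF t_gt(1), of p 0] cf_digit_add_inverse(1)[OF t_gt(1), of p]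
    by (intro exI[of _ "of_int p + 1 / t"]) auto
qed

lemma abs_inverse_diff_le:
  fixes \<beta> q r :: real
  assumes "1 < \<beta>" "0 < r" "r \<le> q"
  shows "\<bar>1 / \<beta> - r / q\<bar> \<le> \<bar>\<beta> - q / r\<bar>"
proof -
  have "q \<le> \<beta> * q"
    using assms by (simp add: mult_le_cancel_right1)
  then have "r \<le> \<beta> * q"
    using assms(3) by linarith
  then have small: "\<bar>r / (\<beta> * q)\<bar> \<le> 1"
    using assms by (simp add: divide_le_eq)
  have "1 / \<beta> - r / q = (r / (\<beta> * q)) * (q / r - \<beta>)"
    using assms by (simp add: field_simps)
  then have "\<bar>1 / \<beta> - r / q\<bar> = \<bar>r / (\<beta> * q)\<bar> * \<bar>\<beta> - q / r\<bar>"
    by (simp only: abs_mult abs_minus_commute)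
  also have "\<dots> \<le> \<bar>\<beta> - q / r\<bar>"
    using mult_right_mono[OF small abs_ge_zero] by simp
  finally show ?thesis .
qed

lemma exists_irrational_with_convergent:
  fixes p q :: int and B :: "nat \<Rightarrow> real"
  assumes "coprime p q" "1 \<le> q" "q \<le> p" "0 < \<delta>"
  shows "\<exists>\<alpha> n. \<alpha> \<notin> \<rat> \<and> cf_den \<alpha> n = q \<and> cf_num \<alpha> n = p
           \<and> B n < cf_den \<alpha> (Suc n) \<and> B n < cf_num \<alpha> (Suc n) \<and> \<bar>\<alpha> - p / q\<bar> < \<delta>"
  using assms
proof (induction "nat q" arbitrary: p q B \<delta> rule: less_induct)
  case less
  consider "q = 1" | "2 \<le> q"
    using less.prems by linarith
  then show ?case
  proof cases
    case 1
    then obtain \<alpha> where "\<alpha> \<notin> \<rat>" "cf_num \<alpha> 0 = p" "B 0 < cf_den \<alpha> 1" "B 0 < cf_num \<alpha> 1"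
        "\<bar>\<alpha> - p\<bar> < \<delta>"
      using exists_irrational_near_integer[of p \<delta> "B 0"] less.prems by auto
    with 1 show ?thesis
      by (intro exI[of _ \<alpha>] exI[of _ 0]) simp
  next
    case 2
    define a r where "a = p div q" and "r = p mod q"
    have p_eq: "p = a * q + r"
      by (simp add: a_def r_def)
    have "r \<noteq> 0"
      using less.prems(1) 2 by (auto simp: r_def coprime_commute dest: coprime_absorb_left)
    then have r: "0 < r" "r < q"
      using 2 unfolding r_def by (simp_all add: order_le_neq_trans)
    have "1 \<le> a"
      using less.prems(3) 2 zdiv_mono1[of q p q] by (simp add: a_def)
    have "coprime q r"
      using less.prems(1) 2 by (simp add: r_def coprime_commute)
    \<comment> \<open>The cap (q - r) / r on the accuracy keeps the tail \<open>\<beta>\<close> above 1.\<close>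
    define \<delta>' where "\<delta>' = min \<delta> ((q - r) / r)"
    define B' where "B' = (\<lambda>n. max 0 (B (Suc n)))"
    obtain \<beta> n where \<beta>: "\<beta> \<notin> \<rat>" "cf_den \<beta> n = r" "cf_num \<beta> n = q"
        "B' n < cf_den \<beta> (Suc n)" "B' n < cf_num \<beta> (Suc n)" "\<bar>\<beta> - q / r\<bar> < \<delta>'"
      using less.hyps[of r q \<delta>' B'] \<open>coprime q r\<close> r less.prems(4) by (auto simp: \<delta>'_def)
    have close: "\<bar>\<beta> - q / r\<bar> < \<delta>" "\<bar>\<beta> - q / r\<bar> < (q - r) / r"
      using \<beta>(6) by (simp_all add: \<delta>'_def)
    moreover have "q / r - (q - r) / r = 1"
      using r by (simp add: field_simps)
    ultimately have "1 < \<beta>"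
      by linarith
    let ?\<alpha> = "of_int a + 1 / \<beta>"
    note shift = cf_den_num_add_inverse[OF \<open>1 < \<beta>\<close>, of a]
    have "cf_den ?\<alpha> (Suc n) = q" "cf_num ?\<alpha> (Suc n) = p"
      using shift[of n] \<beta>(2,3) by (simp_all add: p_eq)
    moreover have "B (Suc n) < cf_den ?\<alpha> (Suc (Suc n))"
      using shift[of "Suc n"] \<beta>(5) by (simp add: B'_def)
    moreover have "B (Suc n) < cf_num ?\<alpha> (Suc (Suc n))"
    proof -
      have "0 \<le> cf_num \<beta> (Suc n)" "0 \<le> cf_den \<beta> (Suc n)"
        using \<beta>(4,5) by (auto simp: B'_def)
      moreover have "cf_num \<beta> (Suc n) \<le> a * cf_num \<beta> (Suc n)"
        using mult_right_mono[OF \<open>1 \<le> a\<close> calculation(1)] by simp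
      ultimately have "cf_num \<beta> (Suc n) \<le> cf_num ?\<alpha> (Suc (Suc n))"
        using shift[of "Suc n"] by linarith
      then show ?thesis
        using \<beta>(5) unfolding B'_def by (smt (verit) of_int_le_iff)
    qed
    moreover have "\<bar>?\<alpha> - p / q\<bar> < \<delta>"
    proof -
      have "?\<alpha> - p / q = 1 / \<beta> - r / q"
        using r by (simp add: p_eq field_simps)
      then show ?thesis
        using abs_inverse_diff_le[OF \<open>1 < \<beta>\<close>, of r q] r close(1) by simp
    qed
    ultimately show ?thesis
      using irrational_add_inverse[OF \<beta>(1)] by blast
  qed
qed

lemma exists_irrational_with_denominator:
  fixes p q :: int and B :: "nat \<Rightarrow> real"
  assumes "coprime p q" "1 \<le> q" "0 < \<delta>"
  shows "\<exists>\<alpha> n. \<alpha> \<notin> \<rat> \<and> cf_den \<alpha> n = q \<and> B n < cf_den \<alpha> (Suc n) \<and> \<bar>\<alpha> - p / q\<bar> < \<delta>"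
proof -
  define k where "k = \<bar>p\<bar> + 1"
  have "coprime (p + k * q) q"
    using assms(1) gcd_add_mult[of q k p] by (simp add: coprime_iff_gcd_eq_1 gcd.commute add.commute)
  moreover have "q \<le> p + k * q"
  proof -
    have "\<bar>p\<bar> \<le> \<bar>p\<bar> * q"
      using assms(2) mult_left_mono[of 1 q "\<bar>p\<bar>"] by simp
    then show ?thesis
      by (simp add: k_def distrib_right)
  qed
  ultimately obtain \<alpha> n where \<alpha>: "\<alpha> \<notin> \<rat>" "cf_den \<alpha> n = q" "B n < cf_den \<alpha> (Suc n)"
      "\<bar>\<alpha> - (p + k * q) / q\<bar> < \<delta>"
    using exists_irrational_with_convergent[of "p + k * q" q \<delta> B] assms(2,3) by auto
  have "\<alpha> - of_int k \<notin> \<rat>"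
    using \<alpha>(1) by (metis Rats_diff Rats_of_int diff_add_cancel Rats_add)
  moreover have "\<alpha> - of_int k - p / q = \<alpha> - (p + k * q) / q"
    using assms(2) by (simp add: field_simps)
  ultimately show ?thesis
    using \<alpha> cf_den_add_int[of \<alpha> "- k"] by (intro exI[of _ "\<alpha> - of_int k"] exI[of _ n]) auto
qed

lemma closure_irrationals_with_large_next_denominator:
  fixes d :: "'a \<Rightarrow> nat" and B :: "'a \<Rightarrow> nat \<Rightarrow> real"
  assumes unbounded: "\<And>N. \<exists>j\<in>J. N \<le> d j"
  shows "closure {\<alpha>. \<alpha> \<notin> \<rat> \<and> (\<exists>j\<in>J. \<exists>n\<ge>1. cf_den \<alpha> n = int (d j) \<and> B j n < cf_den \<alpha> (Suc n))}
    = UNIV" (is "closure ?A = UNIV")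
proof -
  have "\<exists>\<alpha>\<in>?A. dist \<alpha> x < e" if "0 < e" for x e
  proof -
    obtain N where N: "\<And>q. N \<le> q \<Longrightarrow> \<forall>y. \<exists>p::int. coprime p (int q) \<and> \<bar>p / q - y\<bar> < e / 2"
      using eventually_coprime_fraction_near[of "e / 2"] \<open>0 < e\<close> by (auto simp: eventually_sequentially)
    obtain j where "j \<in> J" "max N 2 \<le> d j"
      using unbounded by blast
    then obtain p :: int where p: "coprime p (int (d j))" "\<bar>p / d j - x\<bar> < e / 2"
      using N by fastforce
    obtain \<alpha> n where \<alpha>: "\<alpha> \<notin> \<rat>" "cf_den \<alpha> n = int (d j)" "B j n < cf_den \<alpha> (Suc n)"
        "\<bar>\<alpha> - p / d j\<bar> < e / 2"
      using exists_irrational_with_denominator[OF p(1), of "e / 2" "B j"] \<open>max N 2 \<le> d j\<close> \<open>0 < e\<close>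
      by auto
    have "1 \<le> n"
      using \<alpha>(2) \<open>max N 2 \<le> d j\<close> by (cases n) auto
    then have "\<alpha> \<in> ?A"
      using \<alpha>(1-3) \<open>j \<in> J\<close> by blast
    moreover have "dist \<alpha> x < e"
      using \<alpha>(4) p(2) unfolding dist_real_def by linarith
    ultimately show ?thesis
      by blast
  qed
  then show ?thesis
    by (auto simp: closure_approachable)
qed

theorem lemma6p2:
  fixes \<beta> :: real and f :: "real \<Rightarrow> real" and l :: "nat \<Rightarrow> nat"
  assumes "\<beta> \<notin> \<rat>"
    and "periodic1 f" and "real_analytic f" and "\<not> trig_poly f"
    and "\<forall>k\<ge>1. 0 < l k" and "\<forall>k\<ge>1. l k < l (Suc k)"
    and "\<forall>k\<ge>1. fourier_coeff f (int (l k)) \<noteq> 0"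
    and "filterlim (\<lambda>k. norm (fourier_coeff f (int (l k))) / T_sum f (l k)) at_top sequentially"
  shows "\<forall>M\<ge>1. closure (\<Union>j\<in>{M..}. U_set \<beta> f l j) = UNIV"
proof (intro allI impI)
  fix M :: nat
  assume "1 \<le> M"
  have "k \<le> l (M + k)" for k
  proof (induction k)
    case (Suc k)
    have "l (M + k) < l (M + Suc k)"
      using assms(6) \<open>1 \<le> M\<close> by simp
    then show ?case
      using Suc.IH by linarith
  qed simp
  then have "\<exists>j\<in>{M..}. N \<le> l j" for N
    by (metis atLeast_iff le_add1)
  then have "closure {\<alpha>. \<alpha> \<notin> \<rat> \<and> (\<exists>j\<in>{M..}. \<exists>n\<ge>1. cf_den \<alpha> n = int (l j)
      \<and> 2 * real_of_int (cf_den \<beta> (eta \<beta> f l j)) * (real n)^2 < cf_den \<alpha> (Suc n))} = UNIV"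
    (is "closure ?A = UNIV")
    by (rule closure_irrationals_with_large_next_denominator)
  moreover have "?A \<subseteq> (\<Union>j\<in>{M..}. U_set \<beta> f l j)"
    by (auto simp: U_set_def V_set_def)
  ultimately show "closure (\<Union>j\<in>{M..}. U_set \<beta> f l j) = UNIV"
    using closure_mono by blast
qed

end
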